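(* A cograph $G$ has outcome $\mathcal D$ in the Maker-Breaker domination game if and only if $G$ admits a pairing dominating set.
   Context: Cographs are the graphs that can be built from single vertices by repeatedly taking disjoint unions and joins (equivalently, $P_4$-free graphs). Given a graph $G=(V,E)$, a pairing dominating set is a set of pairs of vertices $\{(u_1,v_1),\ldots,(u_k,v_k)\}$, where all $2k$ vertices are distinct, such that $V=\bigcup_{i=1}^k \big(N[u_i]\cap N[v_i]\big)$, with $N[x]$ the closed neighborhood of $x$. The Maker-Breaker domination game on $G$: Dominator and Staller alternately choose a not-yet-chosen vertex (no passing), starting with all vertices unchosen; when all vertices are chosen, Dominator wins if his vertices form a dominating set of $G$, otherwise Staller wins. Outcome $\mathcal D$ means Dominator has a winning strategy both as first and as second player. *)

theory Defs
  imports Main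
begin

definition graph :: "'a set \<Rightarrow> ('a \<Rightarrow> 'a \<Rightarrow> bool) \<Rightarrow> bool" where
  "graph V E \<longleftrightarrow> finite V \<and> (\<forall>x y. E x y \<longrightarrow> E y x) \<and> (\<forall>x. \<not> E x x)
     \<and> (\<forall>x y. E x y \<longrightarrow> x \<in> V \<and> y \<in> V)"

definition cnbh :: "'a set \<Rightarrow> ('a \<Rightarrow> 'a \<Rightarrow> bool) \<Rightarrow> 'a \<Rightarrow> 'a set" where
  "cnbh V E x = insert x {y \<in> V. E x y}"

definition dominating :: "'a set \<Rightarrow> ('a \<Rightarrow> 'a \<Rightarrow> bool) \<Rightarrow> 'a set \<Rightarrow> bool" where
  "dominating V E D \<longleftrightarrow> D \<subseteq> V \<and> (\<forall>x\<in>V. x \<in> D \<or> (\<exists>y\<in>D. E x y))"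

inductive cograph_on :: "('a \<Rightarrow> 'a \<Rightarrow> bool) \<Rightarrow> 'a set \<Rightarrow> bool" for E where
  single: "cograph_on E {v}"
| union: "\<lbrakk>cograph_on E A; cograph_on E B; A \<inter> B = {};
           \<forall>a\<in>A. \<forall>b\<in>B. \<not> E a b\<rbrakk> \<Longrightarrow> cograph_on E (A \<union> B)"
| join: "\<lbrakk>cograph_on E A; cograph_on E B; A \<inter> B = {};
           \<forall>a\<in>A. \<forall>b\<in>B. E a b\<rbrakk> \<Longrightarrow> cograph_on E (A \<union> B)"

definition cograph :: "'a set \<Rightarrow> ('a \<Rightarrow> 'a \<Rightarrow> bool) \<Rightarrow> bool" where
  "cograph V E \<longleftrightarrow> graph V E \<and> cograph_on E V"

definition pairing_dominating_set ::
  "'a set \<Rightarrow> ('a \<Rightarrow> 'a \<Rightarrow> bool) \<Rightarrow> ('a \<times> 'a) set \<Rightarrow> bool" where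
  "pairing_dominating_set V E P \<longleftrightarrow>
     finite P \<and>
     (\<forall>(u,v)\<in>P. u \<in> V \<and> v \<in> V \<and> u \<noteq> v) \<and>
     (\<forall>p\<in>P. \<forall>q\<in>P. p \<noteq> q \<longrightarrow> {fst p, snd p} \<inter> {fst q, snd q} = {}) \<and>
     V = (\<Union>(u,v)\<in>P. cnbh V E u \<inter> cnbh V E v)"

text \<open>Position: Dominator's chosen vertices D,
Staller's chosen vertices S, and whose turn it is (True = Dominator).
dom_wins V E D S t holds iff Dominator has a winning strategy from that position.\<close>
inductive dom_wins :: "'a set \<Rightarrow> ('a \<Rightarrow> 'a \<Rightarrow> bool) \<Rightarrow> 'a set \<Rightarrow> 'a set \<Rightarrow> bool \<Rightarrow> bool"
  for V E where
  finished: "\<lbrakk>D \<union> S = V; dominating V E D\<rbrakk> \<Longrightarrow> dom_wins V E D S t"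
| dom_move: "\<lbrakk>v \<in> V - (D \<union> S); dom_wins V E (insert v D) S False\<rbrakk>
             \<Longrightarrow> dom_wins V E D S True"
| stal_move: "\<lbrakk>V - (D \<union> S) \<noteq> {};
               \<forall>v \<in> V - (D \<union> S). dom_wins V E D (insert v S) True\<rbrakk>
             \<Longrightarrow> dom_wins V E D S False"

definition outcome_D :: "'a set \<Rightarrow> ('a \<Rightarrow> 'a \<Rightarrow> bool) \<Rightarrow> bool" where
  "outcome_D V E \<longleftrightarrow> dom_wins V E {} {} True \<and> dom_wins V E {} {} False"

end

theory Submission
  imports Defs
begin

text \<open>Staller wins the domination game iff she claims a whole closed neighbourhood, so the game
  is the Maker-Breaker game on the hypergraph of closed neighbourhoods, with Staller as Maker, and
  the pairs of a pairing dominating set form a pairing strategy for Breaker. Conversely, by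
  induction on the cograph, Staller wins as first player whenever Dominator has no pairing
  strategy, and as second player whenever Dominator has no first move after which he has one.
  A disjoint union of graphs gives a disjoint union of hypergraphs: Maker wins it if she wins one
  part, or if Breaker starts and she wins both parts when starting. For a join, either both sides
  have two vertices, and one pair from each side dominates everything, or one side is a single
  universal vertex \<open>c\<close>: Dominator wins by starting at \<open>c\<close>, Staller wins by starting at \<open>c\<close> if she
  wins the rest as second player, and otherwise a pairing of the rest after Dominator's first
  move \<open>x\<close> extends by the pair \<open>{c, x}\<close>.\<close>

section \<open>Maker-Breaker games\<close>

text \<open>A position consists of the unclaimed vertices \<open>B\<close> and the winning sets \<open>F\<close> that Breaker has
  not yet touched, with Maker's vertices removed from them, so Maker has won once \<open>{} \<in> F\<close>.
  The flag says whether Maker moves next.\<close>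

inductive maker_wins :: "'a set \<Rightarrow> 'a set set \<Rightarrow> bool \<Rightarrow> bool" where
  won: "{} \<in> F \<Longrightarrow> maker_wins B F m"
| maker_move: "v \<in> B \<Longrightarrow> maker_wins (B - {v}) ((\<lambda>e. e - {v}) ` F) False \<Longrightarrow> maker_wins B F True"
| breaker_move: "B \<noteq> {} \<Longrightarrow> (\<And>v. v \<in> B \<Longrightarrow> maker_wins (B - {v}) {e \<in> F. v \<notin> e} True)
    \<Longrightarrow> maker_wins B F False"

lemma maker_wins_mono:
  assumes "maker_wins B F m" "F \<subseteq> G"
  shows "maker_wins B G m"
  using assms
proof (induction arbitrary: G rule: maker_wins.induct)
  case (won F B m)
  then show ?case by (blast intro: maker_wins.won)
next
  case (maker_move v B F)
  have "maker_wins (B - {v}) ((\<lambda>e. e - {v}) ` G) False"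
    using maker_move.prems by (intro maker_move.IH) blast
  with maker_move.hyps(1) show ?case by (rule maker_wins.maker_move)
next
  case (breaker_move B F)
  have "maker_wins (B - {v}) {e \<in> G. v \<notin> e} True" if "v \<in> B" for v
    using breaker_move.prems by (intro breaker_move.IH[OF that]) blast
  with breaker_move.hyps(1) show ?case by (rule maker_wins.breaker_move)
qed

lemma maker_wins_empty_board: "maker_wins {} F m \<Longrightarrow> {} \<in> F"
  by (erule maker_wins.cases) auto

text \<open>An extra vertex or an extra move never hurts Maker. The two parts are proved together since a
  Maker move on the extra vertex is handled by the second part one level down.\<close>

lemma maker_wins_claim_and_move_first:
  assumes "maker_wins B F m"
  shows "(\<forall>v\<in>B. maker_wins (B - {v}) ((\<lambda>e. e - {v}) ` F) m) \<and> (\<not> m \<longrightarrow> maker_wins B F True)"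
  using assms
proof (induction rule: maker_wins.induct)
  case (won F B m)
  then show ?case by (force intro: maker_wins.won)
next
  case (maker_move u B F)
  have "maker_wins (B - {v}) ((\<lambda>e. e - {v}) ` F) True" if "v \<in> B" for v
  proof (cases "v = u")
    case True
    then show ?thesis using maker_move.IH by simp
  next
    case False
    have "maker_wins (B - {u} - {v}) ((\<lambda>e. e - {v}) ` (\<lambda>e. e - {u}) ` F) False"
      using maker_move.IH that False by blast
    moreover have "B - {u} - {v} = B - {v} - {u}" by blast
    moreover have "(\<lambda>e. e - {v}) ` (\<lambda>e. e - {u}) ` F = (\<lambda>e. e - {u}) ` (\<lambda>e. e - {v}) ` F"
      by (simp add: image_image Diff_insert2[symmetric] insert_commute)
    ultimately have "maker_wins (B - {v} - {u}) ((\<lambda>e. e - {u}) ` (\<lambda>e. e - {v}) ` F) False"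
      by simp
    with maker_move.hyps(1) False show ?thesis by (intro maker_wins.maker_move[of u]) auto
  qed
  then show ?case by simp
next
  case (breaker_move B F)
  have claim: "maker_wins (B - {v}) ((\<lambda>e. e - {v}) ` F) False" if "v \<in> B" for v
  proof (cases "B - {v} = {}")
    case True
    then have "{} \<in> {e \<in> F. v \<notin> e}"
      using breaker_move.hyps(2)[OF that] by (metis maker_wins_empty_board)
    then show ?thesis by (force intro: maker_wins.won)
  next
    case False
    show ?thesis
    proof (rule maker_wins.breaker_move[OF False])
      fix w assume w: "w \<in> B - {v}"
      have "maker_wins (B - {w} - {v}) ((\<lambda>e. e - {v}) ` {e \<in> F. w \<notin> e}) True"
        using breaker_move.IH w that by blast
      moreover have "B - {w} - {v} = B - {v} - {w}" by blast
      moreover have "(\<lambda>e. e - {v}) ` {e \<in> F. w \<notin> e} = {e \<in> (\<lambda>e. e - {v}) ` F. w \<notin> e}"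
        using w by auto
      ultimately show "maker_wins (B - {v} - {w}) {e \<in> (\<lambda>e. e - {v}) ` F. w \<notin> e} True"
        by simp
    qed
  qed
  obtain v where v: "v \<in> B" using breaker_move.hyps(1) by blast
  have "maker_wins B F True" by (rule maker_wins.maker_move[OF v claim[OF v]])
  then show ?case using claim by simp
qed

lemma maker_wins_move_first: "maker_wins B F False \<Longrightarrow> maker_wins B F True"
  using maker_wins_claim_and_move_first by blast

lemma maker_wins_insert_irrelevant:
  assumes "maker_wins B F m" "u \<notin> B" "\<forall>e\<in>F. u \<notin> e"
  shows "maker_wins (insert u B) F m"
  using assms
proof (induction rule: maker_wins.induct)
  case (won F B m)
  then show ?case by (blast intro: maker_wins.won)
next
  case (maker_move v B F)
  then have "maker_wins (insert u B - {v}) ((\<lambda>e. e - {v}) ` F) False"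
    by (simp add: insert_Diff_if)
  with maker_move.hyps(1) show ?case by (intro maker_wins.maker_move[of v]) auto
next
  case (breaker_move B F)
  show ?case
  proof (rule maker_wins.breaker_move)
    fix w assume "w \<in> insert u B"
    then consider "w = u" | "w \<in> B" by blast
    then show "maker_wins (insert u B - {w}) {e \<in> F. w \<notin> e} True"
    proof cases
      case 1
      have "maker_wins B F False" by (rule maker_wins.breaker_move[OF breaker_move.hyps])
      then have "maker_wins B F True" by (rule maker_wins_move_first)
      moreover have "insert u B - {w} = B" "{e \<in> F. w \<notin> e} = F" using 1 breaker_move.prems by auto
      ultimately show ?thesis by simp
    next
      case 2
      then show ?thesis using breaker_move.IH[OF 2] breaker_move.prems
        by (auto simp: insert_Diff_if)
    qed
  qed simp
qed

lemma maker_wins_Un_irrelevant: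
  assumes "finite B'" "B \<inter> B' = {}" "\<forall>e\<in>F. e \<inter> B' = {}" "maker_wins B F m"
  shows "maker_wins (B \<union> B') F m"
  using assms
proof (induction B' rule: finite_induct)
  case empty
  then show ?case by simp
next
  case (insert u B')
  then have "maker_wins (insert u (B \<union> B')) F m"
    by (intro maker_wins_insert_irrelevant) auto
  then show ?case by simp
qed

section \<open>Pairing strategies\<close>

definition pairing_blocks :: "'a set \<Rightarrow> 'a set set \<Rightarrow> 'a set set \<Rightarrow> bool" where
  "pairing_blocks B F Q \<longleftrightarrow>
     (\<forall>p\<in>Q. card p = 2 \<and> p \<subseteq> B) \<and> pairwise disjnt Q \<and> (\<forall>e\<in>F. \<exists>p\<in>Q. p \<subseteq> e)"

definition pairable :: "'a set \<Rightarrow> 'a set set \<Rightarrow> bool" where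
  "pairable B F \<longleftrightarrow> (\<exists>Q. pairing_blocks B F Q)"

definition pairable_after_move :: "'a set \<Rightarrow> 'a set set \<Rightarrow> bool" where
  "pairable_after_move B F \<longleftrightarrow> (\<exists>x\<in>B. pairable (B - {x}) {e \<in> F. x \<notin> e})"

lemma pairing_blocksI:
  assumes "\<And>p. p \<in> Q \<Longrightarrow> card p = 2" "\<And>p. p \<in> Q \<Longrightarrow> p \<subseteq> B" "pairwise disjnt Q"
    "\<And>e. e \<in> F \<Longrightarrow> \<exists>p\<in>Q. p \<subseteq> e"
  shows "pairing_blocks B F Q"
  using assms unfolding pairing_blocks_def by blast

lemma
  assumes "pairing_blocks B F Q"
  shows pairing_blocks_card: "p \<in> Q \<Longrightarrow> card p = 2"
    and pairing_blocks_subset: "p \<in> Q \<Longrightarrow> p \<subseteq> B"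
    and pairing_blocks_disjoint: "pairwise disjnt Q"
    and pairing_blocks_covers: "e \<in> F \<Longrightarrow> \<exists>p\<in>Q. p \<subseteq> e"
  using assms unfolding pairing_blocks_def by blast+

lemma pairing_blocks_edge_not_singleton:
  assumes "pairing_blocks B F Q" "e \<in> F"
  shows "e - {v} \<noteq> {}"
proof -
  obtain p where p: "p \<in> Q" "p \<subseteq> e" using pairing_blocks_covers[OF assms] by blast
  obtain a b where "p = {a, b}" "a \<noteq> b"
    using pairing_blocks_card[OF assms(1) p(1)] by (meson card_2_iff)
  with p(2) show ?thesis by blast
qed

lemma pairing_blocks_breaker_move:
  assumes "pairing_blocks B F Q"
  shows "pairing_blocks (B - {w}) {e \<in> F. w \<notin> e} {p \<in> Q. w \<notin> p}"
proof (rule pairing_blocksI)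
  show "pairwise disjnt {p \<in> Q. w \<notin> p}"
    using pairing_blocks_disjoint[OF assms] by (rule pairwise_subset) blast
  show "\<exists>p\<in>{p \<in> Q. w \<notin> p}. p \<subseteq> e" if e: "e \<in> {e \<in> F. w \<notin> e}" for e
  proof -
    obtain p where "p \<in> Q" "p \<subseteq> e" using pairing_blocks_covers[OF assms] e by blast
    with e show ?thesis by blast
  qed
qed (use pairing_blocks_card[OF assms] pairing_blocks_subset[OF assms] in auto)

lemma pairing_blocks_maker_move_unpaired:
  assumes "pairing_blocks B F Q" "\<forall>p\<in>Q. v \<notin> p"
  shows "pairing_blocks (B - {v}) ((\<lambda>e. e - {v}) ` F) Q"
proof (rule pairing_blocksI)
  show "p \<subseteq> B - {v}" if "p \<in> Q" for p
    using pairing_blocks_subset[OF assms(1) that] assms(2) that by blast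
  show "\<exists>p\<in>Q. p \<subseteq> e" if e: "e \<in> (\<lambda>e. e - {v}) ` F" for e
  proof -
    obtain e0 where "e0 \<in> F" "e = e0 - {v}" using e by blast
    moreover obtain p where "p \<in> Q" "p \<subseteq> e0" using pairing_blocks_covers[OF assms(1) \<open>e0 \<in> F\<close>] by blast
    ultimately show ?thesis using assms(2) by blast
  qed
qed (use pairing_blocks_card[OF assms(1)] pairing_blocks_disjoint[OF assms(1)] in blast)+

lemma pairing_blocks_maker_move_answered:
  assumes "pairing_blocks B F Q" "{v, w} \<in> Q" "v \<noteq> w"
  shows "pairing_blocks (B - {v} - {w}) {e \<in> (\<lambda>e. e - {v}) ` F. w \<notin> e} (Q - {{v, w}})"
proof (rule pairing_blocksI)
  have apart: "disjnt p {v, w}" if "p \<in> Q - {{v, w}}" for p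
    using pairwiseD[OF pairing_blocks_disjoint[OF assms(1)] _ assms(2)] that by blast
  show "p \<subseteq> B - {v} - {w}" if "p \<in> Q - {{v, w}}" for p
    using pairing_blocks_subset[OF assms(1)] apart that unfolding disjnt_def by blast
  show "pairwise disjnt (Q - {{v, w}})"
    using pairing_blocks_disjoint[OF assms(1)] by (rule pairwise_subset) blast
  show "\<exists>p\<in>Q - {{v, w}}. p \<subseteq> e" if e: "e \<in> {e \<in> (\<lambda>e. e - {v}) ` F. w \<notin> e}" for e
  proof -
    obtain e0 where e0: "e0 \<in> F" "e = e0 - {v}" using e by blast
    with e assms(3) have "w \<notin> e0" by blast
    obtain p where p: "p \<in> Q" "p \<subseteq> e0" using pairing_blocks_covers[OF assms(1) e0(1)] by blast
    with \<open>w \<notin> e0\<close> have "p \<in> Q - {{v, w}}" by blast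
    with p e0(2) apart[of p] show ?thesis unfolding disjnt_def by blast
  qed
qed (use pairing_blocks_card[OF assms(1)] in blast)

text \<open>The pairing strategy: Breaker answers a Maker move on a paired vertex by claiming its
  partner, and otherwise plays arbitrarily.\<close>

lemma pairable_after_maker_move:
  assumes "pairing_blocks B F Q" "v \<in> B" "B - {v} \<noteq> {}"
  shows "pairable_after_move (B - {v}) ((\<lambda>e. e - {v}) ` F)"
proof (cases "\<exists>p\<in>Q. v \<in> p")
  case True
  then obtain p where p: "p \<in> Q" "v \<in> p" by blast
  obtain a b where "p = {a, b}" "a \<noteq> b"
    using pairing_blocks_card[OF assms(1) p(1)] by (meson card_2_iff)
  with p obtain w where w: "{v, w} \<in> Q" "v \<noteq> w" by (metis insert_commute insertE singletonD)
  then have "w \<in> B - {v}" using pairing_blocks_subset[OF assms(1)] by blast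
  with pairing_blocks_maker_move_answered[OF assms(1) w] show ?thesis
    unfolding pairable_after_move_def pairable_def by blast
next
  case False
  obtain w where "w \<in> B - {v}" using assms(3) by blast
  with pairing_blocks_breaker_move[OF pairing_blocks_maker_move_unpaired[OF assms(1)]] False
  show ?thesis unfolding pairable_after_move_def pairable_def by blast
qed

lemma maker_wins_imp_not_pairable:
  assumes "maker_wins B F m"
  shows "if m then \<not> pairable B F else \<not> pairable_after_move B F"
  using assms
proof (induction rule: maker_wins.induct)
  case (won F B m)
  have "\<not> pairing_blocks B' F' Q" if "{} \<in> F'" for B' :: "'a set" and F' Q
    using pairing_blocks_edge_not_singleton[of B' F' Q "{}"] that by blast
  with won show ?case unfolding pairable_after_move_def pairable_def by auto
next
  case (maker_move v B F)
  show ?case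
  proof (simp, intro notI)
    assume "pairable B F"
    then obtain Q where Q: "pairing_blocks B F Q" unfolding pairable_def by blast
    show False
    proof (cases "B - {v} = {}")
      case True
      then have "{} \<in> (\<lambda>e. e - {v}) ` F"
        using maker_move.hyps(2) by (metis maker_wins_empty_board)
      then show False using pairing_blocks_edge_not_singleton[OF Q] by blast
    next
      case False
      then show False
        using pairable_after_maker_move[OF Q maker_move.hyps(1)] maker_move.IH by simp
    qed
  qed
next
  case (breaker_move B F)
  then show ?case unfolding pairable_after_move_def by simp
qed

lemma pairable_imp_not_maker_wins:
  assumes "pairable B F"
  shows "\<not> maker_wins B F m"
proof
  assume "maker_wins B F m"
  then have "maker_wins B F True" by (cases m) (auto intro: maker_wins_move_first)
  with assms show False using maker_wins_imp_not_pairable by fastforce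
qed

lemma pairable_imp_pairable_after_move:
  assumes "pairable B F" "B \<noteq> {}"
  shows "pairable_after_move B F"
proof -
  obtain Q where "pairing_blocks B F Q" using assms(1) unfolding pairable_def by blast
  then have "pairing_blocks (B - {x}) {e \<in> F. x \<notin> e} {p \<in> Q. x \<notin> p}" for x
    by (rule pairing_blocks_breaker_move)
  with assms(2) show ?thesis unfolding pairable_after_move_def pairable_def by blast
qed

lemma pairable_no_edges: "pairable B {}"
  unfolding pairable_def pairing_blocks_def by auto

text \<open>By \<open>maker_wins_imp_not_pairable\<close>, both implications are in fact equivalences.\<close>

definition pairing_decides :: "'a set \<Rightarrow> 'a set set \<Rightarrow> bool" where
  "pairing_decides B F \<longleftrightarrow>
     (\<not> pairable B F \<longrightarrow> maker_wins B F True) \<and>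
     (\<not> pairable_after_move B F \<longrightarrow> maker_wins B F False)"

lemma pairing_decides_if_pairable: "pairable B F \<Longrightarrow> B \<noteq> {} \<Longrightarrow> pairing_decides B F"
  unfolding pairing_decides_def using pairable_imp_pairable_after_move by blast

section \<open>The domination game as a Maker-Breaker game\<close>

abbreviation nbhds :: "'a set \<Rightarrow> ('a \<Rightarrow> 'a \<Rightarrow> bool) \<Rightarrow> 'a set set" where
  "nbhds A E \<equiv> cnbh A E ` A"

lemma cnbh_subset: "x \<in> A \<Longrightarrow> cnbh A E x \<subseteq> A"
  unfolding cnbh_def by blast

lemma cnbh_mono: "A \<subseteq> A' \<Longrightarrow> cnbh A E x \<subseteq> cnbh A' E x"
  unfolding cnbh_def by blast

lemma nbhds_subset: "\<forall>e\<in>nbhds A E. e \<subseteq> A"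
  unfolding cnbh_def by blast

lemma mem_cnbh_commute:
  assumes "symp E" "x \<in> V" "u \<in> V"
  shows "x \<in> cnbh V E u \<longleftrightarrow> u \<in> cnbh V E x"
  using assms(2,3) sympD[OF assms(1), of x u] sympD[OF assms(1), of u x] unfolding cnbh_def by blast

text \<open>In position \<open>(D, S)\<close>, Staller's remaining winning sets are the closed neighbourhoods of the
  vertices not yet dominated by \<open>D\<close>, with Staller's vertices removed.\<close>

definition residual_nbhds :: "'a set \<Rightarrow> ('a \<Rightarrow> 'a \<Rightarrow> bool) \<Rightarrow> 'a set \<Rightarrow> 'a set \<Rightarrow> 'a set set" where
  "residual_nbhds V E D S = (\<lambda>x. cnbh V E x - S) ` {x \<in> V. cnbh V E x \<inter> D = {}}"

lemma residual_nbhds_empty: "residual_nbhds V E {} {} = nbhds V E"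
  unfolding residual_nbhds_def by simp

lemma residual_nbhds_dominator_move:
  "v \<notin> S \<Longrightarrow> {e \<in> residual_nbhds V E D S. v \<notin> e} = residual_nbhds V E (insert v D) S"
  unfolding residual_nbhds_def by auto

lemma residual_nbhds_staller_move:
  "(\<lambda>e. e - {v}) ` residual_nbhds V E D S = residual_nbhds V E D (insert v S)"
  unfolding residual_nbhds_def image_image by (simp add: Diff_insert[symmetric] insert_commute)

lemma empty_in_residual_nbhds_iff:
  assumes "D \<subseteq> V" "D \<union> S = V"
  shows "{} \<in> residual_nbhds V E D S \<longleftrightarrow> \<not> dominating V E D"
proof
  assume "{} \<in> residual_nbhds V E D S"
  then obtain x where "x \<in> V" "cnbh V E x \<inter> D = {}" unfolding residual_nbhds_def by blast
  with assms(1) show "\<not> dominating V E D" unfolding dominating_def cnbh_def by blast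
next
  assume "\<not> dominating V E D"
  then obtain x where x: "x \<in> V" "x \<notin> D" "\<forall>y\<in>D. \<not> E x y"
    using assms(1) unfolding dominating_def by blast
  then have "cnbh V E x \<inter> D = {}" unfolding cnbh_def by blast
  moreover have "cnbh V E x - S = {}" using x assms unfolding cnbh_def by blast
  ultimately show "{} \<in> residual_nbhds V E D S" using x(1) unfolding residual_nbhds_def by blast
qed

lemma dom_wins_imp_not_maker_wins:
  "dom_wins V E D S t \<Longrightarrow> \<not> maker_wins (V - (D \<union> S)) (residual_nbhds V E D S) (\<not> t)"
proof (induction rule: dom_wins.induct)
  case (finished D S t)
  then have "{} \<notin> residual_nbhds V E D S"
    using empty_in_residual_nbhds_iff[of D V S E] unfolding dominating_def by blast
  then show ?case using finished(1) maker_wins_empty_board by fastforce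
next
  case (dom_move v D S)
  have free: "V - (D \<union> S) - {v} = V - (insert v D \<union> S)" and "v \<notin> S" using dom_move.hyps(1) by auto
  from \<open>v \<notin> S\<close> have moved: "{e \<in> residual_nbhds V E D S. v \<notin> e} = residual_nbhds V E (insert v D) S"
    by (rule residual_nbhds_dominator_move)
  show ?case
  proof
    assume "maker_wins (V - (D \<union> S)) (residual_nbhds V E D S) (\<not> True)"
    then show False
    proof (cases rule: maker_wins.cases)
      case won
      then have "{} \<in> residual_nbhds V E (insert v D) S" using moved by blast
      then show False using dom_move.IH maker_wins.won by blast
    next
      case breaker_move
      then have "maker_wins (V - (D \<union> S) - {v}) {e \<in> residual_nbhds V E D S. v \<notin> e} True"
        using dom_move.hyps(1) by blast
      then show False using dom_move.IH free moved by simp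
    qed simp
  qed
next
  case (stal_move D S)
  obtain u where u: "u \<in> V - (D \<union> S)" using stal_move.hyps(1) by blast
  show ?case
  proof
    assume "maker_wins (V - (D \<union> S)) (residual_nbhds V E D S) (\<not> False)"
    then show False
    proof (cases rule: maker_wins.cases)
      case won
      then have "{} - {u} \<in> (\<lambda>e. e - {u}) ` residual_nbhds V E D S" by blast
      then have "{} \<in> residual_nbhds V E D (insert u S)"
        by (simp add: residual_nbhds_staller_move)
      then show False using stal_move.IH u maker_wins.won by blast
    next
      case (maker_move v)
      have "V - (D \<union> S) - {v} = V - (D \<union> insert v S)" by blast
      with maker_move(3) have "maker_wins (V - (D \<union> insert v S)) (residual_nbhds V E D (insert v S)) False"
        by (simp add: residual_nbhds_staller_move)
      with stal_move.IH maker_move(2) show False by simp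
    qed simp
  qed
qed

lemma not_dom_wins_imp_maker_wins:
  assumes "finite V" "D \<subseteq> V" "S \<subseteq> V" "\<not> dom_wins V E D S t"
  shows "maker_wins (V - (D \<union> S)) (residual_nbhds V E D S) (\<not> t)"
  using assms(2-4)
proof (induction "card (V - (D \<union> S))" arbitrary: D S t rule: less_induct)
  case less
  have smaller: "card (V - (insert v D \<union> S)) < card (V - (D \<union> S))"
      "card (V - (D \<union> insert v S)) < card (V - (D \<union> S))" if "v \<in> V - (D \<union> S)" for v
  proof -
    have "card (V - (D \<union> S) - {v}) < card (V - (D \<union> S))"
      using assms(1) that by (intro card_Diff1_less) auto
    moreover have "V - (D \<union> S) - {v} = V - (insert v D \<union> S)" "V - (D \<union> S) - {v} = V - (D \<union> insert v S)"
      by auto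
    ultimately show "card (V - (insert v D \<union> S)) < card (V - (D \<union> S))"
      "card (V - (D \<union> insert v S)) < card (V - (D \<union> S))" by simp_all
  qed
  show ?case
  proof (cases "V - (D \<union> S) = {}")
    case True
    then have "D \<union> S = V" using less.prems(1,2) by blast
    then have "\<not> dominating V E D" using less.prems(3) dom_wins.finished by blast
    then have "{} \<in> residual_nbhds V E D S"
      using empty_in_residual_nbhds_iff[OF less.prems(1) \<open>D \<union> S = V\<close>] by blast
    then show ?thesis by (rule maker_wins.won)
  next
    case nonempty: False
    show ?thesis
    proof (cases t)
      case True
      have "maker_wins (V - (D \<union> S) - {v}) {e \<in> residual_nbhds V E D S. v \<notin> e} True"
        if v: "v \<in> V - (D \<union> S)" for v
      proof -
        have lost: "\<not> dom_wins V E (insert v D) S False"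
          using dom_wins.dom_move[OF v] less.prems(3) True by auto
        have "maker_wins (V - (insert v D \<union> S)) (residual_nbhds V E (insert v D) S) (\<not> False)"
          by (intro less.hyps[OF smaller(1)[OF v]]) (use v lost less.prems(1,2) in auto)
        moreover have "V - (insert v D \<union> S) = V - (D \<union> S) - {v}" by blast
        ultimately show ?thesis using v residual_nbhds_dominator_move[of v S V E D] by simp
      qed
      then have "maker_wins (V - (D \<union> S)) (residual_nbhds V E D S) False"
        by (rule maker_wins.breaker_move[OF nonempty])
      then show ?thesis using True by simp
    next
      case False
      then obtain v where v: "v \<in> V - (D \<union> S)" and lost: "\<not> dom_wins V E D (insert v S) True"
        using dom_wins.stal_move[OF nonempty] less.prems(3) by auto
      have "maker_wins (V - (D \<union> insert v S)) (residual_nbhds V E D (insert v S)) (\<not> True)"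
        by (intro less.hyps[OF smaller(2)[OF v]]) (use v lost less.prems(1,2) in auto)
      moreover have "V - (D \<union> insert v S) = V - (D \<union> S) - {v}" by blast
      ultimately have "maker_wins (V - (D \<union> S)) (residual_nbhds V E D S) True"
        using v residual_nbhds_staller_move[of v V E D S] by (intro maker_wins.maker_move[of v]) auto
      then show ?thesis using False by simp
    qed
  qed
qed

lemma dom_wins_iff_not_maker_wins:
  assumes "finite V"
  shows "dom_wins V E {} {} t \<longleftrightarrow> \<not> maker_wins V (nbhds V E) (\<not> t)"
  using dom_wins_imp_not_maker_wins[of V E "{}" "{}" t]
    not_dom_wins_imp_maker_wins[OF assms, of "{}" "{}" E t]
  by (auto simp: residual_nbhds_empty)

lemma pairing_dominating_set_imp_pairable:
  assumes "symp E" "pairing_dominating_set V E P"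
  shows "pairable V (nbhds V E)"
proof -
  have pairs: "u \<in> V" "v \<in> V" "u \<noteq> v" if "(u, v) \<in> P" for u v
    using assms(2) that unfolding pairing_dominating_set_def by blast+
  have apart: "{fst p, snd p} \<inter> {fst q, snd q} = {}" if "p \<in> P" "q \<in> P" "p \<noteq> q" for p q
    using assms(2) that unfolding pairing_dominating_set_def by blast
  have covered: "\<exists>(u, v)\<in>P. x \<in> cnbh V E u \<and> x \<in> cnbh V E v" if "x \<in> V" for x
    using assms(2) that unfolding pairing_dominating_set_def by blast
  let ?Q = "(\<lambda>(u, v). {u, v}) ` P"
  have "pairing_blocks V (nbhds V E) ?Q"
  proof (rule pairing_blocksI)
    show "card p = 2" "p \<subseteq> V" if "p \<in> ?Q" for p
      using that pairs by auto
    show "pairwise disjnt ?Q"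
    proof (rule pairwiseI)
      fix p q assume "p \<in> ?Q" "q \<in> ?Q" "p \<noteq> q"
      then obtain u v u' v' where "(u, v) \<in> P" "(u', v') \<in> P" "p = {u, v}" "q = {u', v'}" by auto
      with \<open>p \<noteq> q\<close> show "disjnt p q" using apart[of "(u, v)" "(u', v')"] by (auto simp: disjnt_def)
    qed
    show "\<exists>p\<in>?Q. p \<subseteq> e" if e: "e \<in> nbhds V E" for e
    proof -
      obtain x where x: "x \<in> V" "e = cnbh V E x" using e by blast
      then obtain u v where uv: "(u, v) \<in> P" "x \<in> cnbh V E u" "x \<in> cnbh V E v"
        using covered by blast
      then have "{u, v} \<subseteq> e" using x pairs[OF uv(1)] mem_cnbh_commute[OF assms(1)] by blast
      with uv(1) show ?thesis by force
    qed
  qed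
  then show ?thesis unfolding pairable_def by blast
qed

lemma pairable_imp_pairing_dominating_set:
  assumes "finite V" "symp E" "pairable V (nbhds V E)"
  shows "\<exists>P. pairing_dominating_set V E P"
proof -
  obtain Q where Q: "pairing_blocks V (nbhds V E) Q" using assms(3) unfolding pairable_def by blast
  have "\<exists>u v. p = {u, v} \<and> u \<noteq> v" if "p \<in> Q" for p
    using pairing_blocks_card[OF Q that] by (simp add: card_2_iff)
  then obtain a b where ab: "\<And>p. p \<in> Q \<Longrightarrow> p = {a p, b p} \<and> a p \<noteq> b p"
    by metis
  have ab_mem: "a p \<in> V" "b p \<in> V" if "p \<in> Q" for p
    using ab[OF that] pairing_blocks_subset[OF Q that] by auto
  have "finite Q"
    using pairing_blocks_subset[OF Q] assms(1) by (meson Pow_iff finite_Pow_iff finite_subset subsetI)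
  let ?P = "(\<lambda>p. (a p, b p)) ` Q"
  have apart: "{fst p', snd p'} \<inter> {fst q', snd q'} = {}" if pq: "p' \<in> ?P" "q' \<in> ?P" "p' \<noteq> q'" for p' q'
  proof -
    obtain p q where "p \<in> Q" "q \<in> Q" "p' = (a p, b p)" "q' = (a q, b q)" using pq(1,2) by blast
    moreover from this pq(3) have "disjnt p q" using pairwiseD[OF pairing_blocks_disjoint[OF Q]] by blast
    ultimately show ?thesis using ab unfolding disjnt_def by (metis fst_conv snd_conv)
  qed
  have "x \<in> (\<Union>p\<in>Q. cnbh V E (a p) \<inter> cnbh V E (b p))" if x: "x \<in> V" for x
  proof -
    obtain p where p: "p \<in> Q" "p \<subseteq> cnbh V E x" using pairing_blocks_covers[OF Q] x by blast
    then have "a p \<in> cnbh V E x" "b p \<in> cnbh V E x" using ab[OF p(1)] by auto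
    then have "x \<in> cnbh V E (a p) \<inter> cnbh V E (b p)"
      using mem_cnbh_commute[OF assms(2) x] ab_mem[OF p(1)] by blast
    with p(1) show ?thesis by blast
  qed
  moreover have "cnbh V E (a p) \<inter> cnbh V E (b p) \<subseteq> V" if "p \<in> Q" for p
    using cnbh_subset[OF ab_mem(1)[OF that]] by blast
  ultimately have "V = (\<Union>p\<in>Q. cnbh V E (a p) \<inter> cnbh V E (b p))" by blast
  then have "V = (\<Union>(u, v)\<in>?P. cnbh V E u \<inter> cnbh V E v)"
    by (simp add: image_image)
  moreover have "\<forall>(u, v)\<in>?P. u \<in> V \<and> v \<in> V \<and> u \<noteq> v"
    using ab ab_mem by simp
  ultimately have "pairing_dominating_set V E ?P"
    unfolding pairing_dominating_set_def using \<open>finite Q\<close> apart by blast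
  then show ?thesis by blast
qed

section \<open>Disjoint unions of hypergraphs\<close>

lemma pairing_blocks_Un:
  assumes "pairing_blocks B1 F1 Q1" "pairing_blocks B2 F2 Q2" "B1 \<inter> B2 = {}"
  shows "pairing_blocks (B1 \<union> B2) (F1 \<union> F2) (Q1 \<union> Q2)"
proof (rule pairing_blocksI)
  show "pairwise disjnt (Q1 \<union> Q2)"
  proof (rule pairwiseI)
    fix p q assume pq: "p \<in> Q1 \<union> Q2" "q \<in> Q1 \<union> Q2" "p \<noteq> q"
    consider "p \<in> Q1" "q \<in> Q1" | "p \<in> Q2" "q \<in> Q2" | "p \<subseteq> B1" "q \<subseteq> B2" | "p \<subseteq> B2" "q \<subseteq> B1"
      using pq(1,2) pairing_blocks_subset[OF assms(1)] pairing_blocks_subset[OF assms(2)] by blast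
    then show "disjnt p q"
    proof cases
      case 1
      then show ?thesis using pairwiseD[OF pairing_blocks_disjoint[OF assms(1)]] pq(3) by blast
    next
      case 2
      then show ?thesis using pairwiseD[OF pairing_blocks_disjoint[OF assms(2)]] pq(3) by blast
    qed (use assms(3) in \<open>auto simp: disjnt_def\<close>)
  qed
  show "\<exists>p\<in>Q1 \<union> Q2. p \<subseteq> e" if "e \<in> F1 \<union> F2" for e
    using that by (auto dest: pairing_blocks_covers[OF assms(1)] pairing_blocks_covers[OF assms(2)])
  show "card p = 2" if "p \<in> Q1 \<union> Q2" for p
    using that pairing_blocks_card[OF assms(1)] pairing_blocks_card[OF assms(2)] by blast
  show "p \<subseteq> B1 \<union> B2" if "p \<in> Q1 \<union> Q2" for p
    using that pairing_blocks_subset[OF assms(1)] pairing_blocks_subset[OF assms(2)] by blast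
qed

lemma pairable_Un:
  "pairable B1 F1 \<Longrightarrow> pairable B2 F2 \<Longrightarrow> B1 \<inter> B2 = {} \<Longrightarrow> pairable (B1 \<union> B2) (F1 \<union> F2)"
  unfolding pairable_def using pairing_blocks_Un by blast

lemma pairable_after_move_Un:
  assumes "pairable_after_move B1 F1" "pairable B2 F2" "B1 \<inter> B2 = {}" "\<forall>e\<in>F2. e \<subseteq> B2"
  shows "pairable_after_move (B1 \<union> B2) (F1 \<union> F2)"
proof -
  obtain x where x: "x \<in> B1" and "pairable (B1 - {x}) {e \<in> F1. x \<notin> e}"
    using assms(1) unfolding pairable_after_move_def by blast
  then have "pairable (B1 - {x} \<union> B2) ({e \<in> F1. x \<notin> e} \<union> F2)"
    using pairable_Un assms(2,3) by blast
  moreover have "B1 - {x} \<union> B2 = B1 \<union> B2 - {x}" using x assms(3) by blast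
  moreover have "{e \<in> F1. x \<notin> e} \<union> F2 = {e \<in> F1 \<union> F2. x \<notin> e}" using x assms(3,4) by blast
  ultimately show ?thesis using x unfolding pairable_after_move_def by auto
qed

lemma maker_wins_Un:
  assumes "maker_wins B1 F1 m" "finite B2" "B1 \<inter> B2 = {}" "\<forall>e\<in>F1. e \<subseteq> B1"
  shows "maker_wins (B1 \<union> B2) (F1 \<union> F2) m"
proof -
  have "\<forall>e\<in>F1. e \<inter> B2 = {}" using assms(3,4) by blast
  with assms(1-3) have "maker_wins (B1 \<union> B2) F1 m" by (intro maker_wins_Un_irrelevant)
  then show ?thesis by (rule maker_wins_mono) blast
qed

lemma maker_wins_Un_breaker_first:
  assumes "maker_wins B1 F1 True" "maker_wins B2 F2 True" "finite B1" "finite B2" "B1 \<inter> B2 = {}"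
    "\<forall>e\<in>F1. e \<subseteq> B1" "\<forall>e\<in>F2. e \<subseteq> B2" "B1 \<union> B2 \<noteq> {}"
  shows "maker_wins (B1 \<union> B2) (F1 \<union> F2) False"
proof -
  have untouched: "maker_wins (X \<union> Y - {w}) {e \<in> G \<union> H. w \<notin> e} True"
    if "maker_wins Y H True" "finite X" "X \<inter> Y = {}" "\<forall>e\<in>H. e \<subseteq> Y" "w \<in> X"
    for X Y :: "'a set" and G H w
  proof -
    have "maker_wins (Y \<union> (X - {w})) (H \<union> {e \<in> G. w \<notin> e}) True"
      using that by (intro maker_wins_Un) auto
    moreover have "Y \<union> (X - {w}) = X \<union> Y - {w}" using that by blast
    moreover have "H \<union> {e \<in> G. w \<notin> e} = {e \<in> G \<union> H. w \<notin> e}" using that by blast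
    ultimately show ?thesis by simp
  qed
  show ?thesis
  proof (rule maker_wins.breaker_move[OF assms(8)])
    fix w assume "w \<in> B1 \<union> B2"
    then show "maker_wins (B1 \<union> B2 - {w}) {e \<in> F1 \<union> F2. w \<notin> e} True"
    proof
      assume "w \<in> B1"
      with assms(2,3,5,7) show ?thesis by (rule untouched)
    next
      assume "w \<in> B2"
      moreover have "B2 \<inter> B1 = {}" using assms(5) by blast
      ultimately have "maker_wins (B2 \<union> B1 - {w}) {e \<in> F2 \<union> F1. w \<notin> e} True"
        using assms(1,4,6) by (intro untouched)
      then show ?thesis by (simp add: Un_commute)
    qed
  qed
qed

lemma pairing_decides_Un:
  assumes "pairing_decides B1 F1" "pairing_decides B2 F2" "finite B1" "finite B2"
    "B1 \<inter> B2 = {}" "\<forall>e\<in>F1. e \<subseteq> B1" "\<forall>e\<in>F2. e \<subseteq> B2" "B1 \<noteq> {}"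
  shows "pairing_decides (B1 \<union> B2) (F1 \<union> F2)"
proof -
  have lift: "maker_wins (B1 \<union> B2) (F1 \<union> F2) m" if "maker_wins B1 F1 m \<or> maker_wins B2 F2 m" for m
    using that maker_wins_Un[of B1 F1 m B2 F2] maker_wins_Un[of B2 F2 m B1 F1] assms
    by (auto simp: Un_commute Int_commute)
  have "maker_wins (B1 \<union> B2) (F1 \<union> F2) True" if "\<not> pairable (B1 \<union> B2) (F1 \<union> F2)"
    using that pairable_Un[OF _ _ assms(5)] assms(1,2) lift unfolding pairing_decides_def by blast
  moreover have "maker_wins (B1 \<union> B2) (F1 \<union> F2) False"
    if none: "\<not> pairable_after_move (B1 \<union> B2) (F1 \<union> F2)"
  proof (cases "pairable_after_move B1 F1 \<and> pairable_after_move B2 F2")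
    case True
    have "\<not> pairable B2 F2" using pairable_after_move_Un[OF _ _ assms(5,7)] True none by blast
    moreover have "\<not> pairable B1 F1"
      using pairable_after_move_Un[of B2 F2 B1 F1] True none assms(5,6) by (auto simp: Un_commute Int_commute)
    ultimately show ?thesis
      using assms maker_wins_Un_breaker_first unfolding pairing_decides_def by blast
  next
    case False
    then show ?thesis using assms(1,2) lift unfolding pairing_decides_def by blast
  qed
  ultimately show ?thesis unfolding pairing_decides_def by blast
qed

section \<open>Cographs\<close>

lemma nbhds_Un_disconnected:
  assumes "\<forall>a\<in>A. \<forall>b\<in>B. \<not> E a b" "symp E"
  shows "nbhds (A \<union> B) E = nbhds A E \<union> nbhds B E"
proof -
  have "cnbh (A \<union> B) E x = cnbh A E x" if "x \<in> A" for x
    using assms(1) that unfolding cnbh_def by blast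
  moreover have "cnbh (A \<union> B) E x = cnbh B E x" if "x \<in> B" for x
    using assms(1) sympD[OF assms(2), of x] that unfolding cnbh_def by blast
  ultimately show ?thesis by (simp add: image_Un)
qed

lemma pairing_decides_single: "pairing_decides {v} (nbhds {v} E)"
proof -
  have nbhd: "nbhds {v} E = {{v}}" unfolding cnbh_def by auto
  have "{e \<in> {{v}}. v \<notin> e} = {}" by blast
  then have "pairable_after_move {v} {{v}}"
    unfolding pairable_after_move_def using pairable_no_edges by (metis singletonI)
  moreover have "maker_wins {v} {{v}} True"
    by (rule maker_wins.maker_move[of v]) (auto intro: maker_wins.won)
  ultimately show ?thesis unfolding pairing_decides_def nbhd by blast
qed

lemma pairable_join:
  assumes "a1 \<in> A" "a2 \<in> A" "a1 \<noteq> a2" "b1 \<in> B" "b2 \<in> B" "b1 \<noteq> b2" "A \<inter> B = {}"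
    "\<forall>a\<in>A. \<forall>b\<in>B. E a b" "symp E"
  shows "pairable (A \<union> B) (nbhds (A \<union> B) E)"
  unfolding pairable_def
proof (intro exI pairing_blocksI)
  let ?Q = "{{a1, a2}, {b1, b2}}"
  show "card p = 2" "p \<subseteq> A \<union> B" if "p \<in> ?Q" for p
    using that assms(1-6) by auto
  show "pairwise disjnt ?Q"
    using assms(1,2,4,5,7) unfolding pairwise_def disjnt_def by blast
  show "\<exists>p\<in>?Q. p \<subseteq> e" if e: "e \<in> nbhds (A \<union> B) E" for e
  proof -
    obtain y where y: "y \<in> A \<union> B" "e = cnbh (A \<union> B) E y" using e by blast
    show ?thesis
    proof (cases "y \<in> A")
      case True
      then have "{b1, b2} \<subseteq> e" using y assms(4,5,8) unfolding cnbh_def by blast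
      then show ?thesis by blast
    next
      case False
      with y(1) have "y \<in> B" by blast
      then have "E y a1" "E y a2" using assms(1,2,8) by (blast intro: sympD[OF assms(9)])+
      then have "{a1, a2} \<subseteq> e" using y assms(1,2) unfolding cnbh_def by blast
      then show ?thesis by blast
    qed
  qed
qed

lemma cone_mem_cnbh:
  assumes "\<forall>b\<in>B. E c b" "symp E" "y \<in> insert c B"
  shows "c \<in> cnbh (insert c B) E y"
proof (cases "y = c")
  case False
  with assms(1,3) have "E y c" by (blast intro: sympD[OF assms(2)])
  then show ?thesis unfolding cnbh_def by blast
qed (simp add: cnbh_def)

lemma pairable_after_move_cone:
  assumes "\<forall>b\<in>B. E c b" "symp E"
  shows "pairable_after_move (insert c B) (nbhds (insert c B) E)"
proof -
  have "c \<in> cnbh (insert c B) E y" if "y \<in> insert c B" for y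
    using assms that by (rule cone_mem_cnbh)
  then have "{e \<in> nbhds (insert c B) E. c \<notin> e} = {}" by blast
  then show ?thesis unfolding pairable_after_move_def using pairable_no_edges by (metis insertI1)
qed

lemma pairable_cone:
  assumes "c \<notin> B" "\<forall>b\<in>B. E c b" "symp E"
    and "pairable_after_move B (nbhds B E)"
  shows "pairable (insert c B) (nbhds (insert c B) E)"
proof -
  obtain x Q where x: "x \<in> B" and Q: "pairing_blocks (B - {x}) {e \<in> nbhds B E. x \<notin> e} Q"
    using assms(4) unfolding pairable_after_move_def pairable_def by blast
  have "pairing_blocks (insert c B) (nbhds (insert c B) E) (insert {c, x} Q)"
  proof (rule pairing_blocksI)
    have "card {c, x} = 2" using assms(1) x by (cases "c = x") auto
    then show "card p = 2" if "p \<in> insert {c, x} Q" for p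
      using that pairing_blocks_card[OF Q] by blast
    show "p \<subseteq> insert c B" if "p \<in> insert {c, x} Q" for p
      using that pairing_blocks_subset[OF Q] x by blast
    have "disjnt {c, x} p" if "p \<in> Q" for p
      using pairing_blocks_subset[OF Q that] assms(1) unfolding disjnt_def by blast
    then show "pairwise disjnt (insert {c, x} Q)"
      using pairing_blocks_disjoint[OF Q] by (simp add: pairwise_insert disjnt_sym)
    show "\<exists>p\<in>insert {c, x} Q. p \<subseteq> e" if e: "e \<in> nbhds (insert c B) E" for e
    proof -
      obtain y where y: "y \<in> insert c B" "e = cnbh (insert c B) E y" using e by blast
      have "c \<in> e" using cone_mem_cnbh[OF assms(2,3) y(1)] y(2) by simp
      show ?thesis
      proof (cases "x \<in> e")
        case True
        with \<open>c \<in> e\<close> have "{c, x} \<subseteq> e" by simp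
        then show ?thesis by (intro bexI[of _ "{c, x}"]) simp_all
      next
        case False
        have "y \<noteq> c" using False x assms(2) y(2) unfolding cnbh_def by auto
        with y(1) have "cnbh B E y \<in> nbhds B E" by simp
        moreover have "cnbh B E y \<subseteq> e" using y(2) cnbh_mono[of B "insert c B" E y] by blast
        ultimately have "cnbh B E y \<in> {e \<in> nbhds B E. x \<notin> e}" using False by blast
        then obtain p where "p \<in> Q" "p \<subseteq> cnbh B E y" using pairing_blocks_covers[OF Q] by blast
        with \<open>cnbh B E y \<subseteq> e\<close> show ?thesis by blast
      qed
    qed
  qed
  then show ?thesis unfolding pairable_def by blast
qed

lemma maker_wins_cone:
  assumes "c \<notin> B" "maker_wins B (nbhds B E) False"
  shows "maker_wins (insert c B) (nbhds (insert c B) E) True"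
proof (rule maker_wins.maker_move)
  have "cnbh B E y = cnbh (insert c B) E y - {c}" if "y \<in> B" for y
    using assms(1) that unfolding cnbh_def by auto
  then have "nbhds B E \<subseteq> (\<lambda>e. e - {c}) ` nbhds (insert c B) E" by blast
  with assms(2) have "maker_wins B ((\<lambda>e. e - {c}) ` nbhds (insert c B) E) False"
    by (rule maker_wins_mono)
  then show "maker_wins (insert c B - {c}) ((\<lambda>e. e - {c}) ` nbhds (insert c B) E) False"
    using assms(1) by simp
qed simp

lemma pairing_decides_cone:
  assumes "c \<notin> B" "\<forall>b\<in>B. E c b" "symp E" "pairing_decides B (nbhds B E)"
  shows "pairing_decides (insert c B) (nbhds (insert c B) E)"
  using pairable_after_move_cone[where E = E, OF assms(2,3)] pairable_cone[where E = E, OF assms(1-3)]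
    maker_wins_cone[OF assms(1)] assms(4)
  unfolding pairing_decides_def by blast

lemma cograph_on_finite_nonempty: "cograph_on E A \<Longrightarrow> finite A \<and> A \<noteq> {}"
  by (induction rule: cograph_on.induct) auto

lemma cograph_on_pairing_decides:
  assumes "cograph_on E A" "symp E"
  shows "pairing_decides A (nbhds A E)"
  using assms(1)
proof (induction rule: cograph_on.induct)
  case (single v)
  then show ?case by (rule pairing_decides_single)
next
  case (union A B)
  have "nbhds (A \<union> B) E = nbhds A E \<union> nbhds B E"
    using union.hyps(4) assms(2) by (rule nbhds_Un_disconnected)
  then show ?case
    using pairing_decides_Un[OF union.IH _ _ union.hyps(3) nbhds_subset nbhds_subset]
      cograph_on_finite_nonempty[OF union.hyps(1)] cograph_on_finite_nonempty[OF union.hyps(2)]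
    by simp
next
  case (join A B)
  have "A \<noteq> {}" "B \<noteq> {}"
    using cograph_on_finite_nonempty[OF join.hyps(1)] cograph_on_finite_nonempty[OF join.hyps(2)]
    by blast+
  then consider a1 a2 b1 b2 where "a1 \<in> A" "a2 \<in> A" "a1 \<noteq> a2" "b1 \<in> B" "b2 \<in> B" "b1 \<noteq> b2"
    | c where "A = {c}" | c where "B = {c}"
    by blast
  then show ?case
  proof cases
    case 1
    then have "pairable (A \<union> B) (nbhds (A \<union> B) E)"
      using join.hyps(3,4) assms(2) by (intro pairable_join)
    with \<open>A \<noteq> {}\<close> show ?thesis by (intro pairing_decides_if_pairable) auto
  next
    case 2
    then show ?thesis
      using pairing_decides_cone[OF _ _ assms(2) join.IH(2), of c] join.hyps(3,4) by auto
  next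
    case 3
    have "\<forall>a\<in>A. E c a" using 3 join.hyps(4) sympD[OF assms(2)] by blast
    with 3 show ?thesis
      using pairing_decides_cone[OF _ _ assms(2) join.IH(1), of c] join.hyps(3)
      by (auto simp: Un_commute)
  qed
qed

theorem theorem6:
  fixes V :: "'a set" and E :: "'a \<Rightarrow> 'a \<Rightarrow> bool"
  assumes "cograph V E"
  shows "outcome_D V E \<longleftrightarrow> (\<exists>P. pairing_dominating_set V E P)"
proof -
  have "finite V" "symp E" "cograph_on E V"
    using assms unfolding cograph_def graph_def symp_def by blast+
  have "outcome_D V E \<longleftrightarrow> \<not> maker_wins V (nbhds V E) True"
    using dom_wins_iff_not_maker_wins[OF \<open>finite V\<close>] maker_wins_move_first
    unfolding outcome_D_def by auto
  also have "\<dots> \<longleftrightarrow> pairable V (nbhds V E)"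
    using cograph_on_pairing_decides[OF \<open>cograph_on E V\<close> \<open>symp E\<close>] pairable_imp_not_maker_wins
    unfolding pairing_decides_def by blast
  also have "\<dots> \<longleftrightarrow> (\<exists>P. pairing_dominating_set V E P)"
    using pairing_dominating_set_imp_pairable[OF \<open>symp E\<close>]
      pairable_imp_pairing_dominating_set[OF \<open>finite V\<close> \<open>symp E\<close>] by blast
  finally show ?thesis .
qed

end
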